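(* Every span-word is accepted by $\widehat{\mathcal{T}_{p/q}}$; that is, for every $n\in\mathbb{N}$, the infinite word $M_n\ominus\mu_n$ is accepted by $\widehat{\mathcal{T}_{p/q}}$.
   Context: Let $p>q>1$ be coprime integers, $A_p=\{0,\dots,p-1\}$, $A_q=\{0,\dots,q-1\}$ and $B=\{p-(2q-1),\dots,p-1\}$. For $n\in\mathbb{N}$ and $a\in\mathbb{Z}$, let $\tau(n,a)=\frac{np+a}{q}$, defined only when $q$ divides $np+a$. Let $\mathcal{T}_{p/q}$ be the deterministic automaton with state set $\mathbb{N}$, alphabet $A_p$, initial state $0$, and transitions $n\xrightarrow{a}\tau(n,a)$ for $a\in A_p$ with $\tau(n,a)$ defined. Every state $n$ has exactly one outgoing transition labelled by a letter of $A_q$ and exactly one labelled by a letter of $\{p-q,\dots,p-1\}$; the minimal word $\mu_n\in A_q^{\omega}$ (resp. maximal word $M_n\in\{p-q,\dots,p-1\}^{\omega}$) is the unique infinite word over $A_q$ (resp. over $\{p-q,\dots,p-1\}$) labelling a path of $\mathcal{T}_{p/q}$ starting at $n$. The span-word of $n$ is $M_n\ominus\mu_n$, where $\ominus$ denotes letter-wise subtraction; it is a word over $B$. Let $\widehat{\mathcal{T}_{p/q}}$ be the deterministic automaton with state set $\mathbb{N}$, alphabet $B$, initial state $0$, and transitions $n\xrightarrow{a}\tau(n,a)$ for $a\in B$ with $\tau(n,a)$ defined. An infinite word is accepted by an automaton if every finite prefix labels a path starting at the initial state $0$. *)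

theory Defs
  imports Main
begin

text \<open>Rational base automata T_{p/q}. States are natural numbers, letters are integers.
  There is a transition n --a--> m iff tau(n,a) = (n*p + a)/q is defined (q divides n*p+a)
  and equals m.\<close>

definition tr :: "nat \<Rightarrow> nat \<Rightarrow> nat \<Rightarrow> int \<Rightarrow> nat \<Rightarrow> bool" where
  "tr p q n a m \<longleftrightarrow> int q * int m = int n * int p + a"

definition alphA :: "nat \<Rightarrow> int set" where
  "alphA k = {0..<int k}"

definition alphMax :: "nat \<Rightarrow> nat \<Rightarrow> int set" where
  "alphMax p q = {int p - int q..<int p}"

definition alphB :: "nat \<Rightarrow> nat \<Rightarrow> int set" where
  "alphB p q = {int p - (2 * int q - 1)..int p - 1}"

definition labels_inf :: "nat \<Rightarrow> nat \<Rightarrow> int set \<Rightarrow> nat \<Rightarrow> (nat \<Rightarrow> int) \<Rightarrow> bool" where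
  "labels_inf p q S n w \<longleftrightarrow>
     (\<exists>s :: nat \<Rightarrow> nat. s 0 = n \<and> (\<forall>i. w i \<in> S \<and> tr p q (s i) (w i) (s (Suc i))))"

definition labels_prefix :: "nat \<Rightarrow> nat \<Rightarrow> int set \<Rightarrow> nat \<Rightarrow> (nat \<Rightarrow> int) \<Rightarrow> nat \<Rightarrow> bool" where
  "labels_prefix p q S n w k \<longleftrightarrow>
     (\<exists>s :: nat \<Rightarrow> nat. s 0 = n \<and> (\<forall>i<k. w i \<in> S \<and> tr p q (s i) (w i) (s (Suc i))))"

definition minword :: "nat \<Rightarrow> nat \<Rightarrow> nat \<Rightarrow> (nat \<Rightarrow> int)" where
  "minword p q n = (THE w. labels_inf p q (alphA q) n w)"

definition maxword :: "nat \<Rightarrow> nat \<Rightarrow> nat \<Rightarrow> (nat \<Rightarrow> int)" where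
  "maxword p q n = (THE w. labels_inf p q (alphMax p q) n w)"

definition span_word :: "nat \<Rightarrow> nat \<Rightarrow> nat \<Rightarrow> (nat \<Rightarrow> int)" where
  "span_word p q n = (\<lambda>i. maxword p q n i - minword p q n i)"

definition accepted :: "nat \<Rightarrow> nat \<Rightarrow> int set \<Rightarrow> (nat \<Rightarrow> int) \<Rightarrow> bool" where
  "accepted p q S w \<longleftrightarrow> (\<forall>k. labels_prefix p q S 0 w k)"

end

theory Submission
  imports Defs
begin

text \<open>From every state there is exactly one letter in a window {c..<c+q} of
  q consecutive letters: the one making n p + a divisible by q, whose
  target state is \<lceil>(n p + c)/q\<rceil>. Taking c = 0 and c = p - q
  gives the paths of the minimal and maximal words. The target state is monotone in c, so the
  maximal path dominates the minimal one; since
  the transition equation is linear, so the pointwise difference of the two paths is a path from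
  n - n = 0 labelled by the span-word; its letters lie in
  {p-q-(q-1)..p-1} = B.\<close>

fun window_path :: "nat \<Rightarrow> nat \<Rightarrow> int \<Rightarrow> nat \<Rightarrow> nat \<Rightarrow> nat" where
  "window_path p q c n 0 = n"
| "window_path p q c n (Suc i) =
     nat ((int (window_path p q c n i) * int p + c + int q - 1) div int q)"

definition window_word :: "nat \<Rightarrow> nat \<Rightarrow> int \<Rightarrow> nat \<Rightarrow> nat \<Rightarrow> int" where
  "window_word p q c n i =
     int q * int (window_path p q c n (Suc i)) - int (window_path p q c n i) * int p"

lemma ceiling_div_bounds:
  fixes x q :: int
  assumes "0 < q"
  shows "x \<le> q * ((x + q - 1) div q)" and "q * ((x + q - 1) div q) < x + q"
proof -
  have "q * ((x + q - 1) div q) = x + q - 1 - (x + q - 1) mod q"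
    by (simp add: minus_mod_eq_mult_div)
  moreover have "0 \<le> (x + q - 1) mod q" "(x + q - 1) mod q < q"
    using assms by simp_all
  ultimately show "x \<le> q * ((x + q - 1) div q)" "q * ((x + q - 1) div q) < x + q"
    by linarith+
qed

lemma tr_window_word: "tr p q (window_path p q c n i) (window_word p q c n i) (window_path p q c n (Suc i))"
  by (simp add: tr_def window_word_def)

lemma window_word_range:
  assumes "0 < q" and "0 \<le> c"
  shows "window_word p q c n i \<in> {c..<c + int q}"
proof -
  define x where "x = int (window_path p q c n i) * int p + c"
  have "0 \<le> x" using assms(2) by (simp add: x_def)
  then have "0 \<le> (x + int q - 1) div int q"
    using assms(1) by (simp add: pos_imp_zdiv_nonneg_iff)
  then have "window_word p q c n i = int q * ((x + int q - 1) div int q) - (x - c)"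
    by (simp add: window_word_def x_def algebra_simps)
  with ceiling_div_bounds[of "int q" x] assms show ?thesis by auto
qed

lemma labels_inf_window_word:
  assumes "0 < q" and "0 \<le> c"
  shows "labels_inf p q {c..<c + int q} n (window_word p q c n)"
  unfolding labels_inf_def
  using window_word_range[OF assms] tr_window_word by (intro exI[of _ "window_path p q c n"]) auto

lemma small_multiple_eq_0:
  fixes q d :: int
  assumes "0 < q" and "\<bar>q * d\<bar> < q"
  shows "d = 0"
  using assms by (metis abs_mult abs_of_pos mult_less_cancel_left2 nonzero_mult_div_cancel_left
      not_less_zero order.strict_iff_order zabs_less_one_iff)

lemma labels_inf_window_unique:
  assumes q: "0 < q"
    and w: "labels_inf p q {c..<c + int q} n w" and w': "labels_inf p q {c..<c + int q} n w'"
  shows "w = w'"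
proof -
  obtain s where s: "s 0 = n" "\<And>i. w i \<in> {c..<c + int q} \<and> tr p q (s i) (w i) (s (Suc i))"
    using w unfolding labels_inf_def by blast
  obtain s' where s': "s' 0 = n" "\<And>i. w' i \<in> {c..<c + int q} \<and> tr p q (s' i) (w' i) (s' (Suc i))"
    using w' unfolding labels_inf_def by blast
  have same_letter: "w i = w' i" if "s i = s' i" for i
  proof -
    have "int q * (int (s (Suc i)) - int (s' (Suc i))) = w i - w' i"
      using s(2)[of i] s'(2)[of i] that by (simp add: tr_def right_diff_distrib)
    moreover have "\<bar>w i - w' i\<bar> < int q"
      using s(2)[of i] s'(2)[of i] by auto
    ultimately have "int (s (Suc i)) - int (s' (Suc i)) = 0"
      using q by (intro small_multiple_eq_0[of "int q"]) simp_all
    then show ?thesis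
      using s(2)[of i] s'(2)[of i] that by (simp add: tr_def)
  qed
  have "s i = s' i" for i
  proof (induction i)
    case 0
    show ?case using s(1) s'(1) by simp
  next
    case (Suc i)
    then have "int q * int (s (Suc i)) = int q * int (s' (Suc i))"
      using s(2)[of i] s'(2)[of i] same_letter[OF Suc] by (simp add: tr_def)
    then show ?case using q by simp
  qed
  then show ?thesis using same_letter by blast
qed

lemma the_window_word:
  assumes "0 < q" and "0 \<le> c"
  shows "(THE w. labels_inf p q {c..<c + int q} n w) = window_word p q c n"
  using labels_inf_window_word[OF assms, of p n]
    labels_inf_window_unique[OF assms(1) _ labels_inf_window_word[OF assms, of p n]]
  by (rule the_equality)

lemma minword_eq_window_word:
  assumes "0 < q"
  shows "minword p q n = window_word p q 0 n"
  using the_window_word[OF assms, of 0] by (simp add: minword_def alphA_def)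

lemma maxword_eq_window_word:
  assumes "0 < q" and "q \<le> p"
  shows "maxword p q n = window_word p q (int p - int q) n"
  using the_window_word[OF assms(1), of "int p - int q"] assms(2)
  by (simp add: maxword_def alphMax_def)

lemma window_path_mono:
  assumes "0 < q" and "c \<le> c'"
  shows "window_path p q c n i \<le> window_path p q c' n i"
proof (induction i)
  case 0
  show ?case by simp
next
  case (Suc i)
  then have "int (window_path p q c n i) * int p \<le> int (window_path p q c' n i) * int p"
    by (simp add: mult_right_mono)
  then have "int (window_path p q c n i) * int p + c + int q - 1
      \<le> int (window_path p q c' n i) * int p + c' + int q - 1"
    using assms(2) by linarith
  then show ?case
    using assms(1) by (simp add: zdiv_mono1 nat_mono)
qed

lemma tr_diff:
  assumes "tr p q n a m" and "tr p q n' a' m'" and "n \<le> n'" and "m \<le> m'"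
  shows "tr p q (n' - n) (a' - a) (m' - m)"
  using assms by (simp add: tr_def of_nat_diff algebra_simps)

lemma labels_inf_span_word:
  assumes "0 < q" and "q \<le> p"
  shows "labels_inf p q (alphB p q) 0 (span_word p q n)"
proof -
  let ?c = "int p - int q"
  define d where "d i = window_path p q ?c n i - window_path p q 0 n i" for i
  have span: "span_word p q n i = window_word p q ?c n i - window_word p q 0 n i" for i
    using assms by (simp add: span_word_def minword_eq_window_word maxword_eq_window_word)
  have "span_word p q n i \<in> alphB p q" for i
    using window_word_range[OF assms(1), of 0 p n i] window_word_range[OF assms(1), of ?c p n i]
      assms(2) by (auto simp: span alphB_def)
  moreover have "tr p q (d i) (span_word p q n i) (d (Suc i))" for i
    unfolding d_def span
    using assms(2) by (intro tr_diff tr_window_word window_path_mono[OF assms(1)]) simp_all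
  moreover have "d 0 = 0" by (simp add: d_def)
  ultimately show ?thesis
    unfolding labels_inf_def by blast
qed

lemma accepted_if_labels_inf:
  assumes "labels_inf p q S 0 w"
  shows "accepted p q S w"
  using assms unfolding accepted_def labels_prefix_def labels_inf_def by blast

theorem mainTheorem6:
  fixes p q n :: nat
  assumes "1 < q" and "q < p" and "coprime p q"
  shows "accepted p q (alphB p q) (span_word p q n)"
  using assms by (intro accepted_if_labels_inf labels_inf_span_word) simp_all

end
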